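(* Let $M$, $(p_j)_{j\in M}$, $m$ and $LP$ be as follows: $M$ is a finite set of item types, $(p_j)$ is a probability distribution on $M$, $m\ge 1$, and $$LP=\max \sum_{i,S}x_{i,S}w_i(S)\quad\text{s.t.}\quad \sum_{i,S}x_{i,S}c_j(S)\le p_j m\ \ \forall j;\qquad \sum_S x_{i,S}=1\ \ \forall i;\qquad x_{i,S}\ge 0,$$ with $S$ ranging over multisets of at most $m$ items and $c_j(S)$ the multiplicity of $j$ in $S$. Assume the valuations $w_1,\dots,w_n:\mathbb{Z}_+^M\to\mathbb{R}$ are monotone and have the property of diminishing returns. Fix any partial allocation $(T_1,\dots,T_n)$ of multisets. Let the next item $j$ be drawn from $(p_j)$ and allocated greedily, i.e., to an agent maximizing $w_i(T_i+j)-w_i(T_i)$. Then the expected increase in welfare is at least $\frac1m\big(LP-\sum_i w_i(T_i)\big)$.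
   Context: Multisets over $M$ are identified with vectors in $\mathbb{Z}_+^M$. $T+j$ adds one copy of $j$ to $T$. A function $f:\mathbb{Z}_+^M\to\mathbb{R}$ has the property of diminishing returns if for all $x\le y$ (coordinatewise) and every unit vector $e_j$, $f(x+e_j)-f(x)\ge f(y+e_j)-f(y)$. It is monotone if $f(x)\le f(y)$ whenever $x\le y$. *)

theory Defs
  imports Complex_Main "HOL-Library.Multiset"
begin

text \<open>Item types form the finite type 'a (so M = UNIV). Multisets over M are
 'a multiset; the coordinatewise order on Z_+^M is the multiset inclusion order (subseteq_mset).
 Agents are 0..n-1.\<close>

definition monotone_val :: "('a multiset \<Rightarrow> real) \<Rightarrow> bool" where
  "monotone_val f \<longleftrightarrow> (\<forall>x y. x \<subseteq># y \<longrightarrow> f x \<le> f y)"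

definition diminishing_returns :: "('a multiset \<Rightarrow> real) \<Rightarrow> bool" where
  "diminishing_returns f \<longleftrightarrow>
     (\<forall>x y j. x \<subseteq># y \<longrightarrow> f (x + {#j#}) - f x \<ge> f (y + {#j#}) - f y)"

definition bundles :: "nat \<Rightarrow> ('a::finite) multiset set" where
  "bundles m = {S. size S \<le> m}"

definition lp_feasible ::
  "nat \<Rightarrow> nat \<Rightarrow> (('a::finite) \<Rightarrow> real) \<Rightarrow> (nat \<Rightarrow> 'a multiset \<Rightarrow> real) \<Rightarrow> bool" where
  "lp_feasible n m p x \<longleftrightarrow>
     (\<forall>j. (\<Sum>i<n. \<Sum>S\<in>bundles m. x i S * real (count S j)) \<le> p j * real m) \<and>
     (\<forall>i<n. (\<Sum>S\<in>bundles m. x i S) = 1) \<and>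
     (\<forall>i<n. \<forall>S\<in>bundles m. x i S \<ge> 0)"

text \<open>The LP optimum (the maximum exists; Sup equals it).\<close>
definition LP ::
  "nat \<Rightarrow> nat \<Rightarrow> (('a::finite) \<Rightarrow> real) \<Rightarrow> (nat \<Rightarrow> 'a multiset \<Rightarrow> real) \<Rightarrow> real" where
  "LP n m p w = Sup {(\<Sum>i<n. \<Sum>S\<in>bundles m. x i S * w i S) | x. lp_feasible n m p x}"

end

theory Submission
  imports Defs
begin

(* Proof idea: an LP duality argument.  Let D j be the greedy marginal gain of
   item j at the current allocation T.  By monotonicity and diminishing returns,
   every agent i values every bundle S at most w_i(T_i) + sum_j c_j(S) D j,
   since adding S to T_i one item at a time never gains more than D j per copy
   of j.  Hence (u_i = w_i(T_i), d = D) is a feasible dual solution, and weak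
   duality bounds every feasible LP value, and therefore LP itself, by
   sum_i w_i(T_i) + m * sum_j p_j D j.  The expected gain of the greedy step is
   exactly sum_j p_j D j, which gives the claim after dividing by m. *)

lemma finite_bundles: "finite (bundles m :: ('a::finite) multiset set)"
proof -
  have "bundles m = (\<Union>k\<le>m. multisets_of_size (UNIV::'a set) k)"
    by (auto simp: bundles_def multisets_of_size_def)
  thus ?thesis by auto
qed

lemma diminishing_returns_sum_bound:
  fixes f :: "('a::finite) multiset \<Rightarrow> real"
  assumes "diminishing_returns f"
  shows "f (T + S) \<le> f T + (\<Sum>j\<in>UNIV. real (count S j) * (f (T + {#j#}) - f T))"
proof (induction S)
  case empty
  then show ?case by simp
next
  case (add x S)
  have step: "f (T + S + {#x#}) - f (T + S) \<le> f (T + {#x#}) - f T"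
    using assms unfolding diminishing_returns_def by auto
  have "(\<Sum>j\<in>UNIV. real (count (add_mset x S) j) * (f (T + {#j#}) - f T))
      = (\<Sum>j\<in>UNIV. real (count S j) * (f (T + {#j#}) - f T)
                    + (if j = x then f (T + {#j#}) - f T else 0))"
    by (rule sum.cong) (auto simp: algebra_simps)
  also have "\<dots> = (\<Sum>j\<in>UNIV. real (count S j) * (f (T + {#j#}) - f T)) + (f (T + {#x#}) - f T)"
    by (simp add: sum.distrib)
  finally show ?case using add step by simp
qed

lemma valuation_le_marginal_bound:
  fixes f :: "('a::finite) multiset \<Rightarrow> real"
  assumes "monotone_val f" and "diminishing_returns f"
    and marginal_le: "\<And>j. f (T + {#j#}) - f T \<le> d j"
  shows "f S \<le> f T + (\<Sum>j\<in>UNIV. real (count S j) * d j)"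
proof -
  have "f S \<le> f (T + S)"
    using assms(1) unfolding monotone_val_def by simp
  also have "\<dots> \<le> f T + (\<Sum>j\<in>UNIV. real (count S j) * (f (T + {#j#}) - f T))"
    using assms(2) by (rule diminishing_returns_sum_bound)
  also have "\<dots> \<le> f T + (\<Sum>j\<in>UNIV. real (count S j) * d j)"
    by (intro add_left_mono sum_mono mult_left_mono marginal_le) auto
  finally show ?thesis .
qed

lemma lp_weak_duality:
  fixes p :: "'a::finite \<Rightarrow> real"
  assumes feasible: "lp_feasible n m p x"
    and d_nonneg: "\<And>j. d j \<ge> 0"
    and dominates: "\<And>i S. i < n \<Longrightarrow> S \<in> bundles m \<Longrightarrow>
        w i S \<le> u i + (\<Sum>j\<in>UNIV. real (count S j) * d j)"
  shows "(\<Sum>i<n. \<Sum>S\<in>bundles m. x i S * w i S) \<le> (\<Sum>i<n. u i) + real m * (\<Sum>j\<in>UNIV. p j * d j)"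
proof -
  have capacity: "\<And>j. (\<Sum>i<n. \<Sum>S\<in>bundles m. x i S * real (count S j)) \<le> p j * real m"
    and one: "\<And>i. i < n \<Longrightarrow> (\<Sum>S\<in>bundles m. x i S) = 1"
    and x_nonneg: "\<And>i S. i < n \<Longrightarrow> S \<in> bundles m \<Longrightarrow> x i S \<ge> 0"
    using feasible unfolding lp_feasible_def by auto
  have "(\<Sum>i<n. \<Sum>S\<in>bundles m. x i S * w i S)
      \<le> (\<Sum>i<n. \<Sum>S\<in>bundles m. x i S * (u i + (\<Sum>j\<in>UNIV. real (count S j) * d j)))"
    by (intro sum_mono mult_left_mono dominates x_nonneg) auto
  also have "\<dots> = (\<Sum>i<n. u i * (\<Sum>S\<in>bundles m. x i S))
      + (\<Sum>j\<in>UNIV. d j * (\<Sum>i<n. \<Sum>S\<in>bundles m. x i S * real (count S j)))"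
    by (simp add: algebra_simps sum.distrib sum_distrib_left sum_distrib_right
        sum.swap[of _ "bundles m" UNIV] sum.swap[of _ "{..<n}" UNIV])
  also have "\<dots> = (\<Sum>i<n. u i) + (\<Sum>j\<in>UNIV. d j * (\<Sum>i<n. \<Sum>S\<in>bundles m. x i S * real (count S j)))"
    by (simp add: one)
  also have "\<dots> \<le> (\<Sum>i<n. u i) + (\<Sum>j\<in>UNIV. d j * (p j * real m))"
    by (intro add_left_mono sum_mono mult_left_mono capacity d_nonneg)
  also have "\<dots> = (\<Sum>i<n. u i) + real m * (\<Sum>j\<in>UNIV. p j * d j)"
    by (simp add: sum_distrib_left algebra_simps)
  finally show ?thesis .
qed

text \<open>The LP is feasible: give every agent the empty bundle.\<close>
lemma lp_feasible_exists:
  fixes p :: "'a::finite \<Rightarrow> real"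
  assumes p_nonneg: "\<And>j. p j \<ge> 0"
  shows "\<exists>x. lp_feasible n m p x"
proof -
  define x :: "nat \<Rightarrow> 'a multiset \<Rightarrow> real" where "x i S = (if S = {#} then 1 else 0)" for i S
  have total: "(\<Sum>S\<in>bundles m. x i S) = 1" for i
    unfolding x_def by (subst sum.delta[OF finite_bundles]) (simp add: bundles_def)
  have no_items: "(\<Sum>S\<in>bundles m. x i S * real (count S j)) = 0" for i j
    by (rule sum.neutral) (auto simp: x_def)
  have "lp_feasible n m p x"
    unfolding lp_feasible_def using total no_items p_nonneg by (auto simp: x_def)
  then show ?thesis by blast
qed

lemma LP_le_dual_bound:
  fixes p :: "'a::finite \<Rightarrow> real"
  assumes p_nonneg: "\<And>j. p j \<ge> 0"
    and d_nonneg: "\<And>j. d j \<ge> 0"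
    and dominates: "\<And>i S. i < n \<Longrightarrow> S \<in> bundles m \<Longrightarrow>
        w i S \<le> u i + (\<Sum>j\<in>UNIV. real (count S j) * d j)"
  shows "LP n m p w \<le> (\<Sum>i<n. u i) + real m * (\<Sum>j\<in>UNIV. p j * d j)"
proof -
  let ?values = "{(\<Sum>i<n. \<Sum>S\<in>bundles m. x i S * w i S) | x. lp_feasible n m p x}"
  obtain x0 where "lp_feasible n m p x0"
    using lp_feasible_exists[where p = p, OF p_nonneg] by blast
  then have nonempty: "?values \<noteq> {}"
    by auto
  have bounded: "v \<le> (\<Sum>i<n. u i) + real m * (\<Sum>j\<in>UNIV. p j * d j)" if v_value: "v \<in> ?values" for v
  proof -
    obtain x where v: "v = (\<Sum>i<n. \<Sum>S\<in>bundles m. x i S * w i S)"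
      and feasible: "lp_feasible n m p x"
      using v_value by blast
    show ?thesis
      unfolding v by (rule lp_weak_duality[OF feasible d_nonneg dominates])
  qed
  show ?thesis
    unfolding LP_def by (rule cSup_least[OF nonempty bounded])
qed

theorem lemma4p6:
  fixes p :: "'a::finite \<Rightarrow> real"
    and m n :: nat
    and w :: "nat \<Rightarrow> 'a multiset \<Rightarrow> real"
    and T :: "nat \<Rightarrow> 'a multiset"
    and g :: "'a \<Rightarrow> nat"
  assumes p_nonneg: "\<And>j. p j \<ge> 0"
    and p_sum: "(\<Sum>j\<in>UNIV. p j) = 1"
    and m_pos: "m \<ge> 1"
    and mono: "\<And>i. i < n \<Longrightarrow> monotone_val (w i)"
    and dr: "\<And>i. i < n \<Longrightarrow> diminishing_returns (w i)"
    and g_agent: "\<And>j. g j < n"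
    and g_greedy: "\<And>j i. i < n \<Longrightarrow>
        w i (T i + {#j#}) - w i (T i) \<le> w (g j) (T (g j) + {#j#}) - w (g j) (T (g j))"
  shows "(\<Sum>j\<in>UNIV. p j * (w (g j) (T (g j) + {#j#}) - w (g j) (T (g j))))
         \<ge> (LP n m p w - (\<Sum>i<n. w i (T i))) / real m"
proof -
  define D where "D j = w (g j) (T (g j) + {#j#}) - w (g j) (T (g j))" for j
  have D_nonneg: "D j \<ge> 0" for j
    using mono[OF g_agent[of j]] unfolding monotone_val_def D_def by simp
  have dominates: "w i S \<le> w i (T i) + (\<Sum>j\<in>UNIV. real (count S j) * D j)" if "i < n" for i S
    using valuation_le_marginal_bound[OF mono[OF that] dr[OF that] g_greedy[OF that]]
    unfolding D_def .
  have "LP n m p w - (\<Sum>i<n. w i (T i)) \<le> real m * (\<Sum>j\<in>UNIV. p j * D j)"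
    using LP_le_dual_bound[where p = p and d = D and n = n and m = m and w = w
          and u = "\<lambda>i. w i (T i)", OF p_nonneg D_nonneg dominates] by simp
  then have "(LP n m p w - (\<Sum>i<n. w i (T i))) / real m \<le> (\<Sum>j\<in>UNIV. p j * D j)"
    using m_pos by (simp add: divide_le_eq mult.commute)
  then show ?thesis
    unfolding D_def .
qed

end
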